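(* Let $a,\Theta\in l_0(\mathbb{Z})$ with $\Theta^\star=\Theta$ and $\det\mathcal M_{a,\Theta}(z)\not\equiv0$. Then $\det\mathcal M_{a,\Theta}(z)\le0$ for all $z\in\mathbb{T}$ if and only if $s^+_{a,\Theta}=s^-_{a,\Theta}=1$.
   Context: $l_0(\mathbb{Z})$: finitely supported sequences $u$, with $u(z)=\sum_ku(k)z^k$ and $u^\star(z)=\sum_k\overline{u(k)}z^{-k}$. $\mathbb{T}$ is the unit circle. $\mathcal M_{a,\Theta}(z)=\begin{bmatrix}\Theta(z)-\Theta(z^2)a(z)a^\star(z)&-\Theta(z^2)a(z)a^\star(-z)\\-\Theta(z^2)a(-z)a^\star(z)&\Theta(-z)-\Theta(z^2)a(-z)a^\star(-z)\end{bmatrix}$, which is Hermitian for $z\in\mathbb{T}$. $s^\pm_{a,\Theta}:=\max_{z\in\mathbb{T}}\nu_\pm(\mathcal M_{a,\Theta}(z))$ where $\nu_\pm(H)$ are the numbers of positive/negative eigenvalues of a Hermitian matrix $H$. *)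

theory Defs
  imports Complex_Main "Jordan_Normal_Form.Char_Poly"
begin

definition l0 :: "(int \<Rightarrow> complex) set" where
  "l0 = {u. finite {k. u k \<noteq> 0}}"

definition lsym :: "(int \<Rightarrow> complex) \<Rightarrow> complex \<Rightarrow> complex" where
  "lsym u z = (\<Sum>k\<in>{k. u k \<noteq> 0}. u k * z powi k)"

text \<open>The sequence u-star with symbol u-star(z) = sum_k conj(u(k)) z^(-k).\<close>
definition lstar :: "(int \<Rightarrow> complex) \<Rightarrow> (int \<Rightarrow> complex)" where
  "lstar u = (\<lambda>k. cnj (u (- k)))"

definition unit_circle :: "complex set" where
  "unit_circle = {z. cmod z = 1}"

definition Mmat :: "(int \<Rightarrow> complex) \<Rightarrow> (int \<Rightarrow> complex) \<Rightarrow> complex \<Rightarrow> complex mat" where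
  "Mmat a \<Theta> z = mat_of_rows_list 2
     [[lsym \<Theta> z - lsym \<Theta> (z^2) * lsym a z * lsym (lstar a) z,
       - lsym \<Theta> (z^2) * lsym a z * lsym (lstar a) (- z)],
      [- lsym \<Theta> (z^2) * lsym a (- z) * lsym (lstar a) z,
       lsym \<Theta> (- z) - lsym \<Theta> (z^2) * lsym a (- z) * lsym (lstar a) (- z)]]"

definition nu_pos :: "complex mat \<Rightarrow> nat" where
  "nu_pos H = (\<Sum>e\<in>{e. poly (char_poly H) e = 0 \<and> Im e = 0 \<and> Re e > 0}.
                  order e (char_poly H))"

definition nu_neg :: "complex mat \<Rightarrow> nat" where
  "nu_neg H = (\<Sum>e\<in>{e. poly (char_poly H) e = 0 \<and> Im e = 0 \<and> Re e < 0}.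
                  order e (char_poly H))"

definition s_pos :: "(int \<Rightarrow> complex) \<Rightarrow> (int \<Rightarrow> complex) \<Rightarrow> nat" where
  "s_pos a \<Theta> = Max {nu_pos (Mmat a \<Theta> z) | z. z \<in> unit_circle}"

definition s_neg :: "(int \<Rightarrow> complex) \<Rightarrow> (int \<Rightarrow> complex) \<Rightarrow> nat" where
  "s_neg a \<Theta> = Max {nu_neg (Mmat a \<Theta> z) | z. z \<in> unit_circle}"

end

theory Submission
  imports Defs "HOL-Complex_Analysis.Complex_Analysis"
begin

(* On the unit circle, \<Theta>\<^sup>\<star> = \<Theta> makes \<Theta>(z), \<Theta>(-z), \<Theta>(z\<^sup>2) real and a\<^sup>\<star>(z) the conjugate of a(z),
   so M(z) is a Hermitian 2x2 matrix. Its eigenvalues r\<^sub>1, r\<^sub>2 are real with r\<^sub>1 r\<^sub>2 = det M(z); hence M(z)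
   has at most one positive and at most one negative eigenvalue iff det M(z) \<le> 0, and exactly
   one of each when det M(z) < 0. Since det M is a Laurent polynomial, holomorphic on C - {0},
   it cannot vanish on the whole circle without vanishing identically; so if det M \<le> 0 on the
   circle it is negative somewhere, which makes both maxima equal to 1. *)

hide_const (open) Determinants.det

lemma det_mat_2x2:
  fixes A :: "'a::comm_ring_1 mat"
  assumes "A \<in> carrier_mat 2 2"
  shows "det A = A $$ (0,0) * A $$ (1,1) - A $$ (0,1) * A $$ (1,0)"
proof -
  have "det A = (\<Sum>j<2. A $$ (0,j) * cofactor A 0 j)"
    by (rule laplace_expansion_row[OF assms]) auto
  also have "\<dots> = A $$ (0,0) * cofactor A 0 0 + A $$ (0,1) * cofactor A 0 1"
    by (simp add: numeral_2_eq_2)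
  also have "cofactor A 0 0 = A $$ (1,1)"
    unfolding cofactor_def using assms by (subst det_single) (auto simp: mat_delete_def)
  also have "cofactor A 0 1 = - A $$ (1,0)"
    unfolding cofactor_def using assms by (subst det_single) (auto simp: mat_delete_def)
  finally show ?thesis by simp
qed

lemma char_poly_mat_2x2:
  fixes A :: "'a::comm_ring_1 mat"
  assumes "A \<in> carrier_mat 2 2"
  shows "char_poly A =
    [:A $$ (0,0) * A $$ (1,1) - A $$ (0,1) * A $$ (1,0), - (A $$ (0,0) + A $$ (1,1)), 1:]"
proof -
  have "char_poly_matrix A \<in> carrier_mat 2 2" using assms by simp
  then show ?thesis
    unfolding char_poly_def det_mat_2x2[OF \<open>char_poly_matrix A \<in> carrier_mat 2 2\<close>] using assms
    by (simp add: char_poly_matrix_def algebra_simps)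
qed

lemma order_linear_factor: "order e [:-l, 1:] = (if e = l then 1 else 0)"
  using order_power_n_n[of l 1] by (auto intro: order_0I)

lemma sum_order_roots_linear_product:
  fixes l\<^sub>1 l\<^sub>2 :: "'a::idom"
  assumes p: "p = [:-l\<^sub>1, 1:] * [:-l\<^sub>2, 1:]"
  shows "(\<Sum>e\<in>{e. poly p e = 0 \<and> Q e}. order e p) = of_bool (Q l\<^sub>1) + of_bool (Q l\<^sub>2)"
proof -
  have nonzero: "[:-l\<^sub>1, 1:] * [:-l\<^sub>2, 1:] \<noteq> 0" by (simp add: no_zero_divisors)
  have order_p: "order e p = of_bool (e = l\<^sub>1) + of_bool (e = l\<^sub>2)" for e
    unfolding p order_mult[OF nonzero] order_linear_factor by simp
  have "poly p e = (e - l\<^sub>1) * (e - l\<^sub>2)" for e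
    unfolding p by (simp add: algebra_simps)
  then have roots: "{e. poly p e = 0 \<and> Q e} = {l\<^sub>1, l\<^sub>2} \<inter> Collect Q"
    by auto
  have "(\<Sum>e\<in>{l\<^sub>1, l\<^sub>2} \<inter> Collect Q. of_bool (e = l\<^sub>1) + of_bool (e = l\<^sub>2) :: nat)
          = of_bool (Q l\<^sub>1) + of_bool (Q l\<^sub>2)"
    by (simp add: sum.distrib sum.delta)
  then show ?thesis by (simp add: roots order_p)
qed

definition hermitian_2x2 :: "complex mat \<Rightarrow> bool" where
  "hermitian_2x2 H \<longleftrightarrow> H \<in> carrier_mat 2 2 \<and> Im (H $$ (0,0)) = 0 \<and> Im (H $$ (1,1)) = 0
     \<and> H $$ (1,0) = cnj (H $$ (0,1))"

lemma hermitian_2x2_eigenvalues: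
  assumes "hermitian_2x2 H"
  obtains r\<^sub>1 r\<^sub>2 :: real
  where "char_poly H = [:-of_real r\<^sub>1, 1:] * [:-of_real r\<^sub>2, 1:]" and "det H = of_real (r\<^sub>1 * r\<^sub>2)"
proof -
  define x y c where "x = Re (H $$ (0,0))" and "y = Re (H $$ (1,1))" and "c = H $$ (0,1)"
  have H: "H \<in> carrier_mat 2 2" "H $$ (0,0) = of_real x" "H $$ (1,1) = of_real y"
    "H $$ (0,1) = c" "H $$ (1,0) = cnj c"
    using assms unfolding hermitian_2x2_def x_def y_def c_def by (auto simp: complex_eq_iff)
  have c_cnj: "c * cnj c = of_real ((cmod c)\<^sup>2)"
    using complex_norm_square[of c] by simp
  \<comment> \<open>the real roots of \<open>t\<^sup>2 - (x + y) t + (x y - |c|\<^sup>2)\<close>, whose discriminant is a sum of squares\<close>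
  define s where "s = sqrt ((x - y)\<^sup>2 + 4 * (cmod c)\<^sup>2)"
  define r\<^sub>1 r\<^sub>2 where "r\<^sub>1 = (x + y + s) / 2" and "r\<^sub>2 = (x + y - s) / 2"
  have "s\<^sup>2 = (x - y)\<^sup>2 + 4 * (cmod c)\<^sup>2" unfolding s_def by simp
  then have prod: "r\<^sub>1 * r\<^sub>2 = x * y - (cmod c)\<^sup>2" and sum: "r\<^sub>1 + r\<^sub>2 = x + y"
    unfolding r\<^sub>1_def r\<^sub>2_def by (simp_all add: field_simps power2_eq_square)
  have "det H = of_real (r\<^sub>1 * r\<^sub>2)"
    unfolding det_mat_2x2[OF H(1)] H(2-) prod using c_cnj by simp
  moreover have "char_poly H = [:of_real (r\<^sub>1 * r\<^sub>2), - of_real (r\<^sub>1 + r\<^sub>2), 1:]"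
    unfolding char_poly_mat_2x2[OF H(1)] H(2-) prod sum using c_cnj by simp
  moreover have "\<dots> = [:-of_real r\<^sub>1, 1:] * [:-of_real r\<^sub>2, 1:]"
    by (simp add: algebra_simps)
  ultimately show thesis using that by simp
qed

lemma hermitian_2x2_inertia:
  assumes "hermitian_2x2 H"
  obtains r\<^sub>1 r\<^sub>2 :: real
  where "det H = of_real (r\<^sub>1 * r\<^sub>2)"
    and "nu_pos H = (if r\<^sub>1 > 0 then 1 else 0) + (if r\<^sub>2 > 0 then 1 else 0)"
    and "nu_neg H = (if r\<^sub>1 < 0 then 1 else 0) + (if r\<^sub>2 < 0 then 1 else 0)"
proof -
  obtain r\<^sub>1 r\<^sub>2 where cp: "char_poly H = [:-of_real r\<^sub>1, 1:] * [:-of_real r\<^sub>2, 1:]"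
    and "det H = of_real (r\<^sub>1 * r\<^sub>2)"
    using hermitian_2x2_eigenvalues[OF assms] .
  moreover have "nu_pos H = (if r\<^sub>1 > 0 then 1 else 0) + (if r\<^sub>2 > 0 then 1 else 0)"
    unfolding nu_pos_def sum_order_roots_linear_product[OF cp] by simp
  moreover have "nu_neg H = (if r\<^sub>1 < 0 then 1 else 0) + (if r\<^sub>2 < 0 then 1 else 0)"
    unfolding nu_neg_def sum_order_roots_linear_product[OF cp] by simp
  ultimately show thesis using that by blast
qed

lemma hermitian_2x2_det_real:
  assumes "hermitian_2x2 H"
  shows "Im (det H) = 0"
proof -
  obtain r\<^sub>1 r\<^sub>2 where "det H = of_real (r\<^sub>1 * r\<^sub>2)"
    using hermitian_2x2_inertia[OF assms] by blast
  then show ?thesis by simp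
qed

lemma hermitian_2x2_inertia_le_2:
  assumes "hermitian_2x2 H"
  shows "nu_pos H \<le> 2" and "nu_neg H \<le> 2"
proof -
  obtain r\<^sub>1 r\<^sub>2 where "det H = of_real (r\<^sub>1 * r\<^sub>2)"
    and "nu_pos H = (if r\<^sub>1 > 0 then 1 else 0) + (if r\<^sub>2 > 0 then 1 else 0)"
    and "nu_neg H = (if r\<^sub>1 < 0 then 1 else 0) + (if r\<^sub>2 < 0 then 1 else 0)"
    using hermitian_2x2_inertia[OF assms] .
  then show "nu_pos H \<le> 2" and "nu_neg H \<le> 2" by simp_all
qed

lemma hermitian_2x2_inertia_le_1_iff:
  assumes "hermitian_2x2 H"
  shows "nu_pos H \<le> 1 \<and> nu_neg H \<le> 1 \<longleftrightarrow> Re (det H) \<le> 0"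
proof -
  obtain r\<^sub>1 r\<^sub>2 where "det H = of_real (r\<^sub>1 * r\<^sub>2)"
    and "nu_pos H = (if r\<^sub>1 > 0 then 1 else 0) + (if r\<^sub>2 > 0 then 1 else 0)"
    and "nu_neg H = (if r\<^sub>1 < 0 then 1 else 0) + (if r\<^sub>2 < 0 then 1 else 0)"
    using hermitian_2x2_inertia[OF assms] .
  then show ?thesis by (auto simp: mult_le_0_iff zero_less_mult_iff)
qed

lemma hermitian_2x2_inertia_eq_1_if_det_neg:
  assumes "hermitian_2x2 H" and "Re (det H) < 0"
  shows "nu_pos H = 1" and "nu_neg H = 1"
proof -
  obtain r\<^sub>1 r\<^sub>2 where "det H = of_real (r\<^sub>1 * r\<^sub>2)"
    and "nu_pos H = (if r\<^sub>1 > 0 then 1 else 0) + (if r\<^sub>2 > 0 then 1 else 0)"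
    and "nu_neg H = (if r\<^sub>1 < 0 then 1 else 0) + (if r\<^sub>2 < 0 then 1 else 0)"
    using hermitian_2x2_inertia[OF assms(1)] .
  with assms(2) show "nu_pos H = 1" and "nu_neg H = 1"
    by (auto simp: mult_less_0_iff)
qed

lemma lsym_lstar_on_circle:
  assumes "cmod z = 1"
  shows "lsym (lstar u) z = cnj (lsym u z)"
proof -
  have "z * cnj z = 1" using complex_norm_square[of z] assms by simp
  then have cnj_z: "cnj z = inverse z" by (metis inverse_unique)
  have supp: "{k. lstar u k \<noteq> 0} = uminus ` {k. u k \<noteq> 0}"
    unfolding lstar_def by (auto simp: image_iff intro!: exI[of _ "- _"])
  have "lsym (lstar u) z = (\<Sum>k\<in>uminus ` {k. u k \<noteq> 0}. cnj (u (- k)) * z powi k)"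
    unfolding lsym_def supp by (simp add: lstar_def)
  also have "\<dots> = (\<Sum>k\<in>{k. u k \<noteq> 0}. cnj (u k) * z powi (- k))"
    by (subst sum.reindex) (auto simp: inj_on_def)
  also have "\<dots> = cnj (lsym u z)"
    unfolding lsym_def cnj_sum
    by (intro sum.cong refl) (simp add: cnj_z power_int_minus power_int_inverse)
  finally show ?thesis .
qed

lemma lsym_real_on_circle:
  assumes "lstar u = u" and "cmod z = 1"
  shows "Im (lsym u z) = 0"
proof -
  have "Im (lsym u z) = Im (cnj (lsym u z))"
    using lsym_lstar_on_circle[OF assms(2), of u] assms(1) by simp
  then show ?thesis by simp
qed

lemma Mmat_carrier: "Mmat a \<Theta> z \<in> carrier_mat 2 2"
  unfolding Mmat_def carrier_mat_def mat_of_rows_list_def by simp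

lemma Mmat_nth:
  "Mmat a \<Theta> z $$ (0,0) = lsym \<Theta> z - lsym \<Theta> (z^2) * lsym a z * lsym (lstar a) z"
  "Mmat a \<Theta> z $$ (0,1) = - lsym \<Theta> (z^2) * lsym a z * lsym (lstar a) (- z)"
  "Mmat a \<Theta> z $$ (1,0) = - lsym \<Theta> (z^2) * lsym a (- z) * lsym (lstar a) z"
  "Mmat a \<Theta> z $$ (1,1) = lsym \<Theta> (- z) - lsym \<Theta> (z^2) * lsym a (- z) * lsym (lstar a) (- z)"
  unfolding Mmat_def by (simp_all add: mat_of_rows_list_def)

lemma Mmat_hermitian_on_circle:
  assumes \<Theta>: "lstar \<Theta> = \<Theta>" and z: "z \<in> unit_circle"
  shows "hermitian_2x2 (Mmat a \<Theta> z)"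
proof -
  have circle: "cmod z = 1" "cmod (- z) = 1" "cmod (z^2) = 1"
    using z by (auto simp: unit_circle_def norm_power)
  have real: "Im (lsym \<Theta> z) = 0" "Im (lsym \<Theta> (- z)) = 0" "cnj (lsym \<Theta> (z^2)) = lsym \<Theta> (z^2)"
    using lsym_real_on_circle[OF \<Theta>] circle by (auto simp: complex_eq_iff)
  have star: "lsym (lstar a) z = cnj (lsym a z)" "lsym (lstar a) (- z) = cnj (lsym a (- z))"
    using lsym_lstar_on_circle circle by auto
  have norm_sq: "w * cnj w = of_real ((cmod w)\<^sup>2)" for w
    using complex_norm_square[of w] by simp
  have "Im (lsym \<Theta> (z^2)) = 0" using real(3) by (simp add: complex_eq_iff)
  then show ?thesis
    unfolding hermitian_2x2_def Mmat_nth star mult.assoc norm_sq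
    using Mmat_carrier real by simp
qed

lemma lsym_holomorphic [holomorphic_intros]:
  assumes "g holomorphic_on S" and "\<And>z. z \<in> S \<Longrightarrow> g z \<noteq> 0"
  shows "(\<lambda>z. lsym u (g z)) holomorphic_on S"
  unfolding lsym_def using assms by (intro holomorphic_intros) auto

lemma det_Mmat_holomorphic: "(\<lambda>z. det (Mmat a \<Theta> z)) holomorphic_on - {0}"
  unfolding det_mat_2x2[OF Mmat_carrier] Mmat_nth
  by (intro holomorphic_intros) auto

lemma holomorphic_vanishing_on_circle:
  assumes "f holomorphic_on - {0}" and "\<And>z. z \<in> sphere 0 1 \<Longrightarrow> f z = 0" and "w \<noteq> 0"
  shows "f w = 0"
proof (rule analytic_continuation[OF assms(1)])
  show "1 islimpt sphere (0::complex) 1"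
  proof (rule connected_imp_perfect)
    have "1 \<in> sphere (0::complex) 1" and "-1 \<in> sphere (0::complex) 1" by simp_all
    then show "sphere (0::complex) 1 \<noteq> {x}" for x
      by (metis singletonD one_neq_neg_one)
  qed (auto simp: connected_sphere)
qed (use assms in \<open>auto intro: connected_punctured_universe\<close>)

lemma s_pos_eq_1_iff:
  assumes "lstar \<Theta> = \<Theta>"
  shows "s_pos a \<Theta> = 1 \<longleftrightarrow>
    (\<exists>z\<in>unit_circle. nu_pos (Mmat a \<Theta> z) = 1) \<and> (\<forall>z\<in>unit_circle. nu_pos (Mmat a \<Theta> z) \<le> 1)"
proof -
  have "(\<lambda>z. nu_pos (Mmat a \<Theta> z)) ` unit_circle \<subseteq> {..2}"
    using hermitian_2x2_inertia_le_2(1)[OF Mmat_hermitian_on_circle[OF assms]] by auto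
  moreover have "1 \<in> unit_circle" by (simp add: unit_circle_def)
  ultimately show ?thesis
    unfolding s_pos_def Setcompr_eq_image
    by (subst Max_eq_iff) (auto dest: finite_subset intro: rev_image_eqI)
qed

lemma s_neg_eq_1_iff:
  assumes "lstar \<Theta> = \<Theta>"
  shows "s_neg a \<Theta> = 1 \<longleftrightarrow>
    (\<exists>z\<in>unit_circle. nu_neg (Mmat a \<Theta> z) = 1) \<and> (\<forall>z\<in>unit_circle. nu_neg (Mmat a \<Theta> z) \<le> 1)"
proof -
  have "(\<lambda>z. nu_neg (Mmat a \<Theta> z)) ` unit_circle \<subseteq> {..2}"
    using hermitian_2x2_inertia_le_2(2)[OF Mmat_hermitian_on_circle[OF assms]] by auto
  moreover have "1 \<in> unit_circle" by (simp add: unit_circle_def)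
  ultimately show ?thesis
    unfolding s_neg_def Setcompr_eq_image
    by (subst Max_eq_iff) (auto dest: finite_subset intro: rev_image_eqI)
qed

theorem mainTheorem16:
  fixes a \<Theta> :: "int \<Rightarrow> complex"
  assumes "a \<in> l0" and "\<Theta> \<in> l0"
    and "lstar \<Theta> = \<Theta>"
    and "\<exists>z. z \<noteq> 0 \<and> det (Mmat a \<Theta> z) \<noteq> 0"
  shows "(\<forall>z\<in>unit_circle. Re (det (Mmat a \<Theta> z)) \<le> 0)
         \<longleftrightarrow> (s_pos a \<Theta> = 1 \<and> s_neg a \<Theta> = 1)"
proof -
  note herm = Mmat_hermitian_on_circle[OF assms(3)]
  have "unit_circle = sphere 0 1" by (auto simp: unit_circle_def)
  then obtain z\<^sub>0 where z\<^sub>0: "z\<^sub>0 \<in> unit_circle" "det (Mmat a \<Theta> z\<^sub>0) \<noteq> 0"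
    using holomorphic_vanishing_on_circle[OF det_Mmat_holomorphic] assms(4) by blast
  have "nu_pos (Mmat a \<Theta> z\<^sub>0) = 1 \<and> nu_neg (Mmat a \<Theta> z\<^sub>0) = 1"
    if "Re (det (Mmat a \<Theta> z\<^sub>0)) \<le> 0"
  proof -
    have "Re (det (Mmat a \<Theta> z\<^sub>0)) \<noteq> 0"
      using z\<^sub>0(2) hermitian_2x2_det_real[OF herm[OF z\<^sub>0(1)]] by (simp add: complex_eq_iff)
    then show ?thesis
      using hermitian_2x2_inertia_eq_1_if_det_neg[OF herm[OF z\<^sub>0(1)]] that by simp
  qed
  then show ?thesis
    unfolding s_pos_eq_1_iff[OF assms(3)] s_neg_eq_1_iff[OF assms(3)]
    using hermitian_2x2_inertia_le_1_iff[OF herm] z\<^sub>0(1) by blast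
qed

end
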